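(* Let $E$ be a $KB$-space, let $\mathfrak{B}$ be a Boolean subalgebra of $\mathfrak{B}(E)$, let $\xi$ be a forward filtration in $\mathfrak{B}$ and let $T$ be a $\mathfrak{B}$-Volterra operator on $E$. Then $\hat{T}_{\xi}\colon\mathcal{M}_0(\xi)\to\mathcal{M}_0(\xi)$ induces a norm continuous operator $\hat{T}_{\xi}\colon\mathcal{M}_b(\xi)\to\mathcal{M}_b(\xi)$, and with $\iota_{\xi}\colon E\to\mathcal{M}_b(\xi)$, $\iota_\xi(x)=(\xi_nx)_{n\ge1}$, one has $\iota_\xi\circ T=\hat{T}_\xi\circ\iota_\xi$ and $\mathbf{s}\circ\hat{T}_\xi=\hat{T}_{L(\xi)}\circ\mathbf{s}$ as maps $\mathcal{M}_b(\xi)\to\mathcal{M}_b(L(\xi))$; all maps involved are norm continuous operators between Banach lattices.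
   Context: A $KB$-space is a Banach lattice in which every increasing norm bounded sequence is norm convergent (its norm is order continuous). $\mathfrak{B}(E)$ is the Boolean algebra of all order projections on $E$ ($\pi\le\rho$ iff $\pi\rho=\pi$, $\pi^*=I_E-\pi$, zero $\mathbf 0$, unit $\mathbf 1=I_E$). A positive operator $T$ is $\mathfrak{B}$-Volterra if for all $\pi\in\mathfrak{B}$, $x,y\in E$, $\pi x=\pi y$ implies $\pi Tx=\pi Ty$. A forward filtration in $\mathfrak{B}$ is a map $\xi\colon\{0,1,\dots,\infty\}\to\mathfrak{B}$ with $\xi_n\le\xi_{n+1}$, $\xi_0=\mathbf 0$, $\xi_\infty=\mathbf 1$; $L(\xi)_0=\xi_0$, $L(\xi)_n=\xi_{n+1}$ for $n\ge1$. $\mathcal{M}_0(\xi)$ is the set of sequences $(x_n)_{n\ge1}$ in $E$ with $\xi_nx_m=x_n$ for $m\ge n\ge1$; $\mathcal{M}_b(\xi)$ is the subset with $\sup_n\|x_n\|<\infty$, with coordinatewise order and norm $\sup_n\|x_n\|$. $\hat{T}_\xi((x_n))=(\xi_nTx_n)$, and $\mathbf{s}((x_n)_{n\ge1})=(x_{n+1})_{n\ge1}$. *)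

theory Defs
  imports "HOL-Analysis.Analysis"
begin

text \<open>The vector-lattice structure is given by the type classes ordered_real_vector and lattice
  (on a common order); the lattice-norm axiom is the predicate below.\<close>

definition lat_abs :: "'a::{ab_group_add, lattice} \<Rightarrow> 'a" where
  "lat_abs x = sup x (- x)"

definition banach_lattice :: "'a::{banach, ordered_real_vector, lattice} itself \<Rightarrow> bool" where
  "banach_lattice _ \<longleftrightarrow> (\<forall>x y::'a. lat_abs x \<le> lat_abs y \<longrightarrow> norm x \<le> norm y)"

definition KB_space :: "'a::{banach, ordered_real_vector, lattice} itself \<Rightarrow> bool" where
  "KB_space t \<longleftrightarrow> banach_lattice t \<and>
     (\<forall>X::nat \<Rightarrow> 'a. incseq X \<and> bounded (range X) \<longrightarrow> convergent X)"

definition order_projection :: "('a::{real_vector, ordered_ab_group_add} \<Rightarrow> 'a) \<Rightarrow> bool" where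
  "order_projection P \<longleftrightarrow> linear P \<and> P \<circ> P = P \<and> (\<forall>x. 0 \<le> x \<longrightarrow> 0 \<le> P x \<and> P x \<le> x)"

text \<open>Boolean subalgebra of the Boolean algebra of order projections
  (meet = composition, complement = I - P, zero = 0, unit = I).\<close>
definition bool_subalg :: "('a::{real_vector, ordered_ab_group_add} \<Rightarrow> 'a) set \<Rightarrow> bool" where
  "bool_subalg B \<longleftrightarrow> (\<forall>P\<in>B. order_projection P) \<and> (\<lambda>x. 0) \<in> B \<and> id \<in> B \<and>
     (\<forall>P\<in>B. \<forall>Q\<in>B. P \<circ> Q \<in> B) \<and> (\<forall>P\<in>B. (\<lambda>x. x - P x) \<in> B)"

definition proj_le :: "('a \<Rightarrow> 'a) \<Rightarrow> ('a \<Rightarrow> 'a) \<Rightarrow> bool" where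
  "proj_le P Q \<longleftrightarrow> P \<circ> Q = P"

definition positive_op :: "('a::{real_vector, ordered_ab_group_add} \<Rightarrow> 'a) \<Rightarrow> bool" where
  "positive_op T \<longleftrightarrow> linear T \<and> (\<forall>x. 0 \<le> x \<longrightarrow> 0 \<le> T x)"

definition volterra :: "('a::{real_vector, ordered_ab_group_add} \<Rightarrow> 'a) set \<Rightarrow> ('a \<Rightarrow> 'a) \<Rightarrow> bool" where
  "volterra B T \<longleftrightarrow> positive_op T \<and>
     (\<forall>P\<in>B. \<forall>x y. P x = P y \<longrightarrow> P (T x) = P (T y))"

text \<open>Forward filtration: \<xi>_0,\<xi>_1,... in B, increasing, \<xi>_0 = 0; the value \<xi>_\<infinity> = I is implicit.\<close>
definition forward_filtration ::
  "('a::{real_vector, ordered_ab_group_add} \<Rightarrow> 'a) set \<Rightarrow> (nat \<Rightarrow> 'a \<Rightarrow> 'a) \<Rightarrow> bool" where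
  "forward_filtration B \<xi> \<longleftrightarrow> (\<forall>n. \<xi> n \<in> B) \<and> (\<forall>n. proj_le (\<xi> n) (\<xi> (Suc n))) \<and>
     \<xi> 0 = (\<lambda>x. 0) \<and> id \<in> B"

definition Lshift :: "(nat \<Rightarrow> 'a \<Rightarrow> 'a) \<Rightarrow> nat \<Rightarrow> 'a \<Rightarrow> 'a" where
  "Lshift \<xi> n = (if n = 0 then \<xi> 0 else \<xi> (Suc n))"

text \<open>Sequences (x_n)_{n\<ge>1} are encoded as functions nat \<Rightarrow> 'a; the condition is imposed also
  for n = 0, which (as \<xi>_0 = 0) just forces the dummy entry x 0 to be 0.\<close>
definition M0 :: "(nat \<Rightarrow> 'a \<Rightarrow> 'a) \<Rightarrow> (nat \<Rightarrow> 'a) set" where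
  "M0 \<xi> = {x. \<forall>n m. n \<le> m \<longrightarrow> \<xi> n (x m) = x n}"

definition Mb :: "(nat \<Rightarrow> 'a \<Rightarrow> 'a) \<Rightarrow> (nat \<Rightarrow> 'a::real_normed_vector) set" where
  "Mb \<xi> = {x \<in> M0 \<xi>. bounded (range x)}"

definition supnorm :: "(nat \<Rightarrow> 'a::real_normed_vector) \<Rightarrow> real" where
  "supnorm x = (SUP n. norm (x n))"

definition That :: "(nat \<Rightarrow> 'a \<Rightarrow> 'a) \<Rightarrow> ('a \<Rightarrow> 'a) \<Rightarrow> (nat \<Rightarrow> 'a) \<Rightarrow> nat \<Rightarrow> 'a" where
  "That \<xi> T x = (\<lambda>n. \<xi> n (T (x n)))"

definition sshift :: "(nat \<Rightarrow> 'a::zero) \<Rightarrow> nat \<Rightarrow> 'a" where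
  "sshift x = (\<lambda>n. if n = 0 then 0 else x (Suc n))"

definition iota :: "(nat \<Rightarrow> 'a \<Rightarrow> 'a) \<Rightarrow> 'a \<Rightarrow> nat \<Rightarrow> 'a" where
  "iota \<xi> x = (\<lambda>n. \<xi> n x)"

text \<open>S is a Banach lattice under coordinatewise operations/order and the sup norm:
  a linear subspace closed under coordinatewise sup/inf that is complete for the sup norm
  (the lattice-norm property is then inherited from 'a).\<close>
definition seq_banach_lattice ::
  "(nat \<Rightarrow> 'a::{real_normed_vector, lattice}) set \<Rightarrow> bool" where
  "seq_banach_lattice S \<longleftrightarrow>
     (\<forall>x\<in>S. bounded (range x)) \<and> (\<lambda>n. 0) \<in> S \<and>
     (\<forall>x\<in>S. \<forall>y\<in>S. (\<lambda>n. x n + y n) \<in> S) \<and> (\<forall>c. \<forall>x\<in>S. (\<lambda>n. c *\<^sub>R x n) \<in> S) \<and>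
     (\<forall>x\<in>S. \<forall>y\<in>S. (\<lambda>n. sup (x n) (y n)) \<in> S \<and> (\<lambda>n. inf (x n) (y n)) \<in> S) \<and>
     (\<forall>X::nat \<Rightarrow> nat \<Rightarrow> 'a. (\<forall>k. X k \<in> S) \<and>
         (\<forall>e>0. \<exists>N. \<forall>k\<ge>N. \<forall>l\<ge>N. supnorm (\<lambda>n. X k n - X l n) < e) \<longrightarrow>
       (\<exists>x\<in>S. (\<lambda>k. supnorm (\<lambda>n. X k n - x n)) \<longlonglongrightarrow> 0))"

definition seq_bounded_op ::
  "(nat \<Rightarrow> 'a::real_normed_vector) set \<Rightarrow> (nat \<Rightarrow> 'a) set \<Rightarrow> ((nat \<Rightarrow> 'a) \<Rightarrow> (nat \<Rightarrow> 'a)) \<Rightarrow> bool" where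
  "seq_bounded_op S S' f \<longleftrightarrow> (\<forall>x\<in>S. f x \<in> S') \<and>
     (\<forall>x\<in>S. \<forall>y\<in>S. f (\<lambda>n. x n + y n) = (\<lambda>n. f x n + f y n)) \<and>
     (\<forall>c. \<forall>x\<in>S. f (\<lambda>n. c *\<^sub>R x n) = (\<lambda>n. c *\<^sub>R f x n)) \<and>
     (\<exists>C. \<forall>x\<in>S. supnorm (f x) \<le> C * supnorm x)"

definition vec_seq_bounded_op ::
  "(nat \<Rightarrow> 'a::real_normed_vector) set \<Rightarrow> ('a \<Rightarrow> (nat \<Rightarrow> 'a)) \<Rightarrow> bool" where
  "vec_seq_bounded_op S' f \<longleftrightarrow> (\<forall>x. f x \<in> S') \<and>
     (\<forall>x y. f (x + y) = (\<lambda>n. f x n + f y n)) \<and> (\<forall>c x. f (c *\<^sub>R x) = (\<lambda>n. c *\<^sub>R f x n)) \<and>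
     (\<exists>C. \<forall>x. supnorm (f x) \<le> C * norm x)"

end

theory Submission
  imports Defs "HOL-Library.Lattice_Algebras"
begin

text \<open>
  A positive operator T is bounded: otherwise
  there are x_n \<ge> 0 of norm at most 1 with norm (T x_n) > 4^n, and the positive vector
  y = \<Sum> 2^-n x_n dominates every 2^-n x_n, so norm (T y) > 2^n for all n.
  Order projections are lattice homomorphisms of norm at most 1, hence the identities
  \<xi>_n x_m = x_n cut out a closed sublattice of the Banach lattice of bounded sequences.
  Since \<xi>_n \<xi>_m = \<xi>_n for n \<le> m, the Volterra property
  \<xi>_n x = \<xi>_n y \<Longrightarrow> \<xi>_n (T x) = \<xi>_n (T y) shows that That \<xi> T preserves M_0(\<xi>) and
  commutes with \<iota>_\<xi>; the shift identity is a reindexing, as L(\<xi>)_n = \<xi>_(n+1).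
\<close>

section \<open>Lattice-ordered groups\<close>

text \<open>The sort {ordered_ab_group_add, lattice} is not a subclass of lattice_ab_group_add_abs,
  so the library theory is made available through an interpretation with lat_abs as absolute
  value.\<close>

interpretation lattice_abs: lattice_ab_group_add_abs lat_abs "(+)"
    "0::'a::{ordered_ab_group_add, lattice}" "(-)" uminus "(\<le>)" "(<)" inf sup
  by unfold_locales (auto simp: add_left_mono lat_abs_def)

lemma sup_diff_0_eq_if_inf_eq_0:
  fixes a b :: "'a::{ordered_ab_group_add, lattice}"
  assumes "inf a b = 0"
  shows "sup (a - b) 0 = a"
proof -
  have "sup (a - b) 0 + b = sup a b"
    by (simp add: lattice_abs.add_sup_distrib_right)
  also have "\<dots> = a + b"
    using lattice_abs.add_eq_inf_sup[of a b] assms by simp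
  finally show ?thesis
    by (simp add: eq_diff_eq[symmetric])
qed

lemma sup_0_diff_sup_uminus_0:
  fixes z :: "'a::{ordered_ab_group_add, lattice}"
  shows "sup z 0 - sup (- z) 0 = z"
proof -
  have "sup (- z) 0 = - inf z 0"
    using lattice_abs.neg_inf_eq_sup[of z 0] by simp
  then show ?thesis
    using lattice_abs.add_eq_inf_sup[of z 0] by simp
qed

lemma inf_pos_neg_parts_eq_0:
  fixes z :: "'a::{ordered_ab_group_add, lattice}"
  shows "inf (sup z 0) (sup (- z) 0) = 0"
proof -
  have sum: "sup z 0 + sup (- z) 0 = lat_abs z"
    using lattice_abs.abs_prts[of z] lattice_abs.pprt_neg[of z]
    by (simp add: lattice_abs.pprt_def)
  have "sup (sup z 0) (sup (- z) 0) = sup (lat_abs z) 0"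
    by (simp add: lat_abs_def sup_aci)
  also have "\<dots> = lat_abs z"
    by (simp add: sup_absorb1)
  finally show ?thesis
    using lattice_abs.add_eq_inf_sup[of "sup z 0" "sup (- z) 0"] sum by simp
qed

section \<open>Banach lattices and positive operators\<close>

lemma banach_lattice_norm_le:
  assumes "banach_lattice TYPE('a::{banach, ordered_real_vector, lattice})"
    and "lat_abs x \<le> lat_abs (y::'a)"
  shows "norm x \<le> norm y"
  using assms unfolding banach_lattice_def by blast

lemma banach_lattice_norm_mono:
  assumes bl: "banach_lattice TYPE('a::{banach, ordered_real_vector, lattice})"
    and "0 \<le> x" "x \<le> (y::'a)"
  shows "norm x \<le> norm y"
  using banach_lattice_norm_le[OF bl, of x y] assms
  by (simp add: lattice_abs.abs_of_nonneg)

lemma banach_lattice_norm_lat_abs: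
  assumes bl: "banach_lattice TYPE('a::{banach, ordered_real_vector, lattice})"
  shows "norm (lat_abs (x::'a)) = norm x"
  using banach_lattice_norm_le[OF bl, of x "lat_abs x"]
    banach_lattice_norm_le[OF bl, of "lat_abs x" x]
  by (simp add: lattice_abs.abs_idempotent)

lemma banach_lattice_norm_sup_le:
  assumes bl: "banach_lattice TYPE('a::{banach, ordered_real_vector, lattice})"
  shows "norm (sup x (y::'a)) \<le> norm x + norm y"
proof -
  define c where "c = lat_abs x + lat_abs y"
  have x: "x \<le> c" and minus_x: "- x \<le> c" and y: "y \<le> c"
    unfolding c_def
    by (rule add_increasing2[OF lattice_abs.abs_ge_zero lattice_abs.abs_ge_self],
        rule add_increasing2[OF lattice_abs.abs_ge_zero lattice_abs.abs_ge_minus_self],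
        rule add_increasing[OF lattice_abs.abs_ge_zero lattice_abs.abs_ge_self])
  have "- sup x y \<le> c"
    using minus_x by (rule order_trans[rotated]) simp
  then have "lat_abs (sup x y) \<le> c"
    unfolding lat_abs_def[of "sup x y"] using x y by simp
  then have "lat_abs (sup x y) \<le> lat_abs c"
    unfolding c_def
    by (simp only: lattice_abs.abs_of_nonneg
        [OF add_nonneg_nonneg[OF lattice_abs.abs_ge_zero lattice_abs.abs_ge_zero]])
  then have "norm (sup x y) \<le> norm c"
    by (rule banach_lattice_norm_le[OF bl])
  also have "\<dots> \<le> norm x + norm y"
    using norm_triangle_ineq[of "lat_abs x" "lat_abs y"]
    by (simp add: c_def banach_lattice_norm_lat_abs[OF bl])
  finally show ?thesis .
qed

lemma banach_lattice_norm_inf_le: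
  assumes bl: "banach_lattice TYPE('a::{banach, ordered_real_vector, lattice})"
  shows "norm (inf x (y::'a)) \<le> norm x + norm y"
  using banach_lattice_norm_sup_le[OF bl, of "- x" "- y"]
  by (simp only: lattice_abs.inf_eq_neg_sup[of x y] norm_minus_cancel)

lemma banach_lattice_nonneg_limit:
  assumes bl: "banach_lattice TYPE('a::{banach, ordered_real_vector, lattice})"
    and lim: "X \<longlonglongrightarrow> (l::'a)" and nonneg: "\<And>k. 0 \<le> X k"
  shows "0 \<le> l"
proof -
  have "norm (sup (- l) 0) \<le> norm (X k - l)" for k
  proof (rule banach_lattice_norm_le[OF bl])
    have "- l \<le> X k - l"
      using nonneg[of k] by simp
    also have "\<dots> \<le> lat_abs (X k - l)"
      by (rule lattice_abs.abs_ge_self)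
    finally show "lat_abs (sup (- l) 0) \<le> lat_abs (X k - l)"
      by (simp add: lattice_abs.abs_of_nonneg)
  qed
  moreover have "(\<lambda>k. norm (X k - l)) \<longlonglongrightarrow> 0"
    using lim by (simp add: LIM_zero_iff tendsto_norm_zero)
  ultimately have "norm (sup (- l) 0) \<le> 0"
    by (intro LIMSEQ_le_const) auto
  then have "sup (- l) 0 = 0"
    by simp
  then show ?thesis
    using sup_ge1[of "- l" 0] by simp
qed

lemma banach_lattice_le_suminf:
  assumes bl: "banach_lattice TYPE('a::{banach, ordered_real_vector, lattice})"
    and "summable u" and nonneg: "\<And>n. 0 \<le> (u n::'a)"
  shows "u n \<le> suminf u"
proof -
  have "(\<lambda>k. (\<Sum>i<k + Suc n. u i) - u n) \<longlonglongrightarrow> suminf u - u n"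
    using LIMSEQ_ignore_initial_segment[OF summable_LIMSEQ[OF \<open>summable u\<close>], of "Suc n"]
    by (intro tendsto_diff tendsto_const)
  moreover have "0 \<le> (\<Sum>i<k + Suc n. u i) - u n" for k
  proof -
    have "(\<Sum>i<k + Suc n. u i) - u n = (\<Sum>i\<in>{..<k + Suc n} - {n}. u i)"
      by (simp add: sum_diff1)
    also have "0 \<le> \<dots>"
      by (intro sum_nonneg nonneg)
    finally show ?thesis .
  qed
  ultimately have "0 \<le> suminf u - u n"
    by (rule banach_lattice_nonneg_limit[OF bl])
  then show ?thesis
    by simp
qed

lemma positive_op_linear: "positive_op T \<Longrightarrow> linear T"
  unfolding positive_op_def by blast

lemma positive_op_nonneg: "positive_op T \<Longrightarrow> 0 \<le> x \<Longrightarrow> 0 \<le> T x"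
  unfolding positive_op_def by blast

lemma positive_op_mono:
  assumes "positive_op T" and "x \<le> y"
  shows "T x \<le> T y"
proof -
  have "0 \<le> y - x"
    using assms(2) by simp
  then have "0 \<le> T (y - x)"
    by (rule positive_op_nonneg[OF assms(1)])
  then show ?thesis
    by (simp add: linear_diff[OF positive_op_linear[OF assms(1)]])
qed

lemma positive_op_bounded_on_nonneg_unit_ball:
  fixes T :: "'a::{banach, ordered_real_vector, lattice} \<Rightarrow> 'a"
  assumes bl: "banach_lattice TYPE('a)" and T: "positive_op T"
  obtains M where "\<And>x. 0 \<le> x \<Longrightarrow> norm x \<le> 1 \<Longrightarrow> norm (T x) \<le> M"
proof (rule ccontr)
  assume "\<not> thesis"
  with that have "\<forall>n::nat. \<exists>x. 0 \<le> x \<and> norm x \<le> 1 \<and> 4 ^ n < norm (T x)"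
    by (meson not_le)
  then obtain x where x_nonneg: "\<And>n. 0 \<le> x n" and x_norm: "\<And>n. norm (x n) \<le> 1"
    and Tx: "\<And>n. 4 ^ n < norm (T (x n))"
    by metis
  define u where "u n = (1/2::real) ^ n *\<^sub>R x n" for n
  have u_nonneg: "0 \<le> u n" for n
    unfolding u_def using x_nonneg by (simp add: scaleR_nonneg_nonneg)
  have "summable (\<lambda>n. norm (u n))"
    by (rule summable_comparison_test[OF _ summable_geometric[of "1/2::real"]])
      (use x_norm in \<open>auto simp: u_def mult_left_le\<close>)
  then have "summable u"
    by (rule summable_norm_cancel)
  have "2 ^ n < norm (T (suminf u))" for n
  proof -
    have "(2::real) ^ n = (1/2 * 4) ^ n"
      by simp
    also have "\<dots> = (1/2) ^ n * 4 ^ n"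
      by (rule power_mult_distrib)
    also have "\<dots> < (1/2) ^ n * norm (T (x n))"
      using Tx[of n] by simp
    also have "\<dots> = norm (T (u n))"
      by (simp add: u_def linear_scale[OF positive_op_linear[OF T]])
    also have "\<dots> \<le> norm (T (suminf u))"
      by (intro banach_lattice_norm_mono[OF bl] positive_op_nonneg[OF T] u_nonneg
          positive_op_mono[OF T] banach_lattice_le_suminf[OF bl \<open>summable u\<close> u_nonneg])
    finally show ?thesis .
  qed
  moreover obtain n where "norm (T (suminf u)) < 2 ^ n"
    using real_arch_pow[of 2 "norm (T (suminf u))"] by auto
  ultimately show False
    using less_asym by blast
qed

lemma positive_op_bounded_linear:
  fixes T :: "'a::{banach, ordered_real_vector, lattice} \<Rightarrow> 'a"
  assumes bl: "banach_lattice TYPE('a)" and T: "positive_op T"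
  shows "bounded_linear T"
proof -
  note T_linear = positive_op_linear[OF T]
  obtain M where M: "\<And>x. 0 \<le> x \<Longrightarrow> norm x \<le> 1 \<Longrightarrow> norm (T x) \<le> M"
    using positive_op_bounded_on_nonneg_unit_ball[OF bl T] by blast
  have nonneg_bound: "norm (T x) \<le> M * norm x" if "0 \<le> x" for x
  proof (cases "x = 0")
    case True
    then show ?thesis
      by (simp add: linear_0[OF T_linear])
  next
    case False
    have "norm (T ((1 / norm x) *\<^sub>R x)) \<le> M"
      using False that by (intro M) (simp_all add: scaleR_nonneg_nonneg)
    then show ?thesis
      using False by (simp add: linear_scale[OF T_linear] field_simps)
  qed
  have "norm (T x) \<le> norm x * (2 * M)" for x
  proof -
    have "T x = T (sup x 0) - T (sup (- x) 0)"
      by (metis sup_0_diff_sup_uminus_0 linear_diff[OF T_linear])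
    then have "norm (T x) \<le> norm (T (sup x 0)) + norm (T (sup (- x) 0))"
      by (metis norm_triangle_ineq4)
    also have "\<dots> \<le> M * norm (sup x 0) + M * norm (sup (- x) 0)"
      by (intro add_mono nonneg_bound) simp_all
    also have "\<dots> \<le> M * norm x + M * norm x"
      using banach_lattice_norm_sup_le[OF bl, of x 0] banach_lattice_norm_sup_le[OF bl, of "- x" 0]
        M[of 0] by (intro add_mono mult_left_mono) (simp_all add: linear_0[OF T_linear])
    finally show ?thesis
      by (simp add: algebra_simps)
  qed
  then show ?thesis
    using T_linear by (intro bounded_linear_intro[where K = "2 * M"])
      (simp_all add: linear_add linear_scale)
qed

section \<open>Order projections\<close>

lemma order_projection_linear: "order_projection P \<Longrightarrow> linear P"
  unfolding order_projection_def by blast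

lemma order_projection_nonneg: "order_projection P \<Longrightarrow> 0 \<le> x \<Longrightarrow> 0 \<le> P x"
  unfolding order_projection_def by blast

lemma order_projection_le: "order_projection P \<Longrightarrow> 0 \<le> x \<Longrightarrow> P x \<le> x"
  unfolding order_projection_def by blast

lemma order_projection_sup_0:
  fixes P :: "'a::{ordered_real_vector, lattice} \<Rightarrow> 'a"
  assumes P: "order_projection P"
  shows "P (sup z 0) = sup (P z) 0"
proof -
  define a b where "a = P (sup z 0)" and "b = P (sup (- z) 0)"
  have "inf a b \<le> inf (sup z 0) (sup (- z) 0)"
    unfolding a_def b_def by (intro inf_mono order_projection_le[OF P]) simp_all
  moreover have "0 \<le> inf a b"
    unfolding a_def b_def by (simp add: order_projection_nonneg[OF P])
  ultimately have "inf a b = 0"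
    by (simp add: inf_pos_neg_parts_eq_0 order.antisym)
  moreover have "P z = a - b"
    unfolding a_def b_def
    by (metis sup_0_diff_sup_uminus_0 linear_diff[OF order_projection_linear[OF P]])
  ultimately show ?thesis
    by (simp add: a_def b_def sup_diff_0_eq_if_inf_eq_0)
qed

lemma order_projection_sup:
  fixes P :: "'a::{ordered_real_vector, lattice} \<Rightarrow> 'a"
  assumes P: "order_projection P"
  shows "P (sup x y) = sup (P x) (P y)"
proof -
  have sup_eq: "sup u v = v + sup (u - v) 0" for u v :: 'a
    by (simp add: lattice_abs.add_sup_distrib_left)
  show ?thesis
    by (simp only: sup_eq[of x y] sup_eq[of "P x" "P y"] order_projection_sup_0[OF P]
        linear_add[OF order_projection_linear[OF P]] linear_diff[OF order_projection_linear[OF P]])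
qed

lemma order_projection_inf:
  fixes P :: "'a::{ordered_real_vector, lattice} \<Rightarrow> 'a"
  assumes P: "order_projection P"
  shows "P (inf x y) = inf (P x) (P y)"
  by (simp only: lattice_abs.inf_eq_neg_sup[of x y] lattice_abs.inf_eq_neg_sup[of "P x" "P y"]
      order_projection_sup[OF P] linear_neg[OF order_projection_linear[OF P]])

lemma order_projection_norm_le:
  fixes P :: "'a::{banach, ordered_real_vector, lattice} \<Rightarrow> 'a"
  assumes bl: "banach_lattice TYPE('a)" and P: "order_projection P"
  shows "norm (P x) \<le> norm x"
proof (rule banach_lattice_norm_le[OF bl])
  have "lat_abs (P x) = P (lat_abs x)"
    unfolding lat_abs_def
    by (simp add: order_projection_sup[OF P] linear_neg[OF order_projection_linear[OF P]])
  also have "\<dots> \<le> lat_abs x"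
    by (rule order_projection_le[OF P lattice_abs.abs_ge_zero])
  finally show "lat_abs (P x) \<le> lat_abs x" .
qed

lemma order_projection_bounded_linear:
  fixes P :: "'a::{banach, ordered_real_vector, lattice} \<Rightarrow> 'a"
  assumes bl: "banach_lattice TYPE('a)" and P: "order_projection P"
  shows "bounded_linear P"
  using order_projection_linear[OF P] order_projection_norm_le[OF bl P]
  by (intro bounded_linear_intro[where K = 1]) (simp_all add: linear_add linear_scale)

lemma volterra_positive_op: "volterra B T \<Longrightarrow> positive_op T"
  unfolding volterra_def by blast

lemma volterra_eq: "volterra B T \<Longrightarrow> P \<in> B \<Longrightarrow> P x = P y \<Longrightarrow> P (T x) = P (T y)"
  unfolding volterra_def by blast

section \<open>Bounded sequences\<close>

lemma norm_le_supnorm: "bounded (range x) \<Longrightarrow> norm (x n) \<le> supnorm x"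
  unfolding supnorm_def
  by (rule cSUP_upper) (auto simp: bounded_iff intro: bdd_aboveI)

lemma supnorm_le: "(\<And>n. norm (x n) \<le> C) \<Longrightarrow> supnorm x \<le> C"
  unfolding supnorm_def by (rule cSUP_least) auto

lemma bounded_range_pointwise:
  fixes f :: "'a::real_normed_vector \<Rightarrow> 'b::real_normed_vector \<Rightarrow> 'c::real_normed_vector"
  assumes f: "\<And>a b. norm (f a b) \<le> norm a + norm b"
    and "bounded (range x)" "bounded (range y)"
  shows "bounded (range (\<lambda>n. f (x n) (y n)))"
proof -
  obtain A C where "\<And>n. norm (x n) \<le> A" "\<And>n. norm (y n) \<le> C"
    using assms(2,3) by (auto simp: bounded_iff)
  then show ?thesis
    by (intro boundedI[where B = "A + C"]) (auto intro: order_trans[OF f] add_mono)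
qed

lemma supnorm_Cauchy_convergent:
  fixes X :: "nat \<Rightarrow> nat \<Rightarrow> 'a::banach"
  assumes bounded: "\<And>k. bounded (range (X k))"
    and Cauchy: "\<forall>e>0. \<exists>N. \<forall>k\<ge>N. \<forall>l\<ge>N. supnorm (\<lambda>n. X k n - X l n) < e"
  obtains x where "bounded (range x)" and "\<And>n. (\<lambda>k. X k n) \<longlonglongrightarrow> x n"
    and "(\<lambda>k. supnorm (\<lambda>n. X k n - x n)) \<longlonglongrightarrow> 0"
proof -
  have "uniformly_Cauchy_on UNIV X"
  proof (rule uniformly_Cauchy_onI)
    fix e :: real
    assume "e > 0"
    then obtain N where N: "\<forall>k\<ge>N. \<forall>l\<ge>N. supnorm (\<lambda>n. X k n - X l n) < e"
      using Cauchy by blast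
    have "dist (X k n) (X l n) < e" if "k \<ge> N" "l \<ge> N" for k l n
      using norm_le_supnorm[OF bounded_minus_comp[OF bounded[of k] bounded[of l]], of n] N that
      by (simp add: dist_norm order_le_less_trans)
    then show "\<exists>M. \<forall>n\<in>UNIV. \<forall>k\<ge>M. \<forall>l\<ge>M. dist (X k n) (X l n) < e"
      by blast
  qed
  then obtain x where lim: "uniform_limit UNIV X x sequentially"
    using Cauchy_uniformly_convergent unfolding uniformly_convergent_on_def by blast
  have x_bounded: "bounded (range x)"
    using uniform_limit_bounded[OF lim] bounded by simp
  show thesis
  proof
    show "bounded (range x)"
      by (rule x_bounded)
    show "(\<lambda>k. X k n) \<longlonglongrightarrow> x n" for n
      by (rule tendsto_uniform_limitI[OF lim]) simp
    show "(\<lambda>k. supnorm (\<lambda>n. X k n - x n)) \<longlonglongrightarrow> 0"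
    proof (rule LIMSEQ_I)
      fix r :: real
      assume "r > 0"
      then obtain N where N: "\<forall>k\<ge>N. \<forall>n. dist (X k n) (x n) < r / 2"
        using lim \<open>r > 0\<close> unfolding uniform_limit_sequentially_iff
        by (metis UNIV_I half_gt_zero)
      have "norm (supnorm (\<lambda>n. X k n - x n)) < r" if "k \<ge> N" for k
      proof -
        have "0 \<le> supnorm (\<lambda>n. X k n - x n)"
          using norm_le_supnorm[OF bounded_minus_comp[OF bounded x_bounded]]
          by (rule order_trans[OF norm_ge_zero])
        moreover have "supnorm (\<lambda>n. X k n - x n) \<le> r / 2"
          using N that by (intro supnorm_le) (simp add: dist_norm less_imp_le)
        ultimately show ?thesis
          using \<open>r > 0\<close> by simp
      qed
      then show "\<exists>N. \<forall>k\<ge>N. norm (supnorm (\<lambda>n. X k n - x n) - 0) < r"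
        by auto
    qed
  qed
qed

section \<open>Sequences adapted to a chain of order projections\<close>

locale projection_chain =
  fixes \<eta> :: "nat \<Rightarrow> 'a::{banach, ordered_real_vector, lattice} \<Rightarrow> 'a"
  assumes order_projection: "order_projection (\<eta> n)"
    and comp_le: "n \<le> m \<Longrightarrow> \<eta> n \<circ> \<eta> m = \<eta> n"
begin

lemma apply_le: "n \<le> m \<Longrightarrow> \<eta> n (\<eta> m x) = \<eta> n x"
  using comp_le by (metis comp_apply)

lemma linear_proj: "linear (\<eta> n)"
  by (rule order_projection_linear[OF order_projection])

lemma M0_iff: "x \<in> M0 \<eta> \<longleftrightarrow> (\<forall>n m. n \<le> m \<longrightarrow> \<eta> n (x m) = x n)"
  by (simp add: M0_def)

lemma M0_zero: "(\<lambda>n. 0) \<in> M0 \<eta>"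
  by (simp add: M0_iff linear_0[OF linear_proj])

lemma M0_add: "x \<in> M0 \<eta> \<Longrightarrow> y \<in> M0 \<eta> \<Longrightarrow> (\<lambda>n. x n + y n) \<in> M0 \<eta>"
  by (simp add: M0_iff linear_add[OF linear_proj])

lemma M0_scaleR: "x \<in> M0 \<eta> \<Longrightarrow> (\<lambda>n. c *\<^sub>R x n) \<in> M0 \<eta>"
  by (simp add: M0_iff linear_scale[OF linear_proj])

lemma M0_sup: "x \<in> M0 \<eta> \<Longrightarrow> y \<in> M0 \<eta> \<Longrightarrow> (\<lambda>n. sup (x n) (y n)) \<in> M0 \<eta>"
  by (simp add: M0_iff order_projection_sup[OF order_projection])

lemma M0_inf: "x \<in> M0 \<eta> \<Longrightarrow> y \<in> M0 \<eta> \<Longrightarrow> (\<lambda>n. inf (x n) (y n)) \<in> M0 \<eta>"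
  by (simp add: M0_iff order_projection_inf[OF order_projection])

lemma M0_pointwise_limit:
  assumes bl: "banach_lattice TYPE('a)"
    and M0: "\<And>k. X k \<in> M0 \<eta>" and lim: "\<And>n. (\<lambda>k. X k n) \<longlonglongrightarrow> x n"
  shows "x \<in> M0 \<eta>"
  unfolding M0_iff
proof (intro allI impI)
  fix n m :: nat
  assume "n \<le> m"
  have "(\<lambda>k. \<eta> n (X k m)) \<longlonglongrightarrow> \<eta> n (x m)"
    by (rule bounded_linear.tendsto[OF order_projection_bounded_linear[OF bl order_projection] lim])
  moreover have "\<eta> n (X k m) = X k n" for k
    using M0 \<open>n \<le> m\<close> by (simp add: M0_iff)
  ultimately show "\<eta> n (x m) = x n"
    using lim[of n] by (simp add: LIMSEQ_unique)
qed

lemma seq_banach_lattice_Mb: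
  assumes bl: "banach_lattice TYPE('a)"
  shows "seq_banach_lattice (Mb \<eta>)"
  unfolding seq_banach_lattice_def Mb_def
proof (intro conjI ballI allI impI)
  show "(\<lambda>n. 0) \<in> {x \<in> M0 \<eta>. bounded (range x)}"
    by (simp add: M0_zero)
  fix X :: "nat \<Rightarrow> nat \<Rightarrow> 'a"
  assume "(\<forall>k. X k \<in> {x \<in> M0 \<eta>. bounded (range x)}) \<and>
    (\<forall>e>0. \<exists>N. \<forall>k\<ge>N. \<forall>l\<ge>N. supnorm (\<lambda>n. X k n - X l n) < e)"
  then have M0: "\<And>k. X k \<in> M0 \<eta>" and bounded: "\<And>k. bounded (range (X k))"
    and Cauchy: "\<forall>e>0. \<exists>N. \<forall>k\<ge>N. \<forall>l\<ge>N. supnorm (\<lambda>n. X k n - X l n) < e"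
    by auto
  obtain x where "bounded (range x)" and "\<And>n. (\<lambda>k. X k n) \<longlonglongrightarrow> x n"
    and "(\<lambda>k. supnorm (\<lambda>n. X k n - x n)) \<longlonglongrightarrow> 0"
    using supnorm_Cauchy_convergent[OF bounded Cauchy] by blast
  then show "\<exists>x\<in>{x \<in> M0 \<eta>. bounded (range x)}. (\<lambda>k. supnorm (\<lambda>n. X k n - x n)) \<longlonglongrightarrow> 0"
    using M0_pointwise_limit[where X = X, OF bl M0] by blast
qed (auto simp: M0_add M0_scaleR M0_sup M0_inf bounded_plus_comp bounded_scaleR_comp
      bounded_range_pointwise[OF banach_lattice_norm_sup_le[OF bl]]
      bounded_range_pointwise[OF banach_lattice_norm_inf_le[OF bl]])

lemma That_M0:
  assumes T: "volterra B T" and B: "\<And>n. \<eta> n \<in> B" and x: "x \<in> M0 \<eta>"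
  shows "That \<eta> T x \<in> M0 \<eta>"
  unfolding M0_iff That_def
proof (intro allI impI)
  fix n m :: nat
  assume "n \<le> m"
  have "\<eta> n (x m) = \<eta> n (x n)"
    using x \<open>n \<le> m\<close> by (simp add: M0_iff)
  then have "\<eta> n (T (x m)) = \<eta> n (T (x n))"
    by (rule volterra_eq[OF T B])
  then show "\<eta> n (\<eta> m (T (x m))) = \<eta> n (T (x n))"
    using \<open>n \<le> m\<close> by (simp add: apply_le)
qed

lemma seq_bounded_op_That:
  assumes bl: "banach_lattice TYPE('a)" and T: "volterra B T" and B: "\<And>n. \<eta> n \<in> B"
  shows "seq_bounded_op (Mb \<eta>) (Mb \<eta>) (That \<eta> T)"
proof -
  have T_bounded: "bounded_linear T"
    by (rule positive_op_bounded_linear[OF bl volterra_positive_op[OF T]])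
  then obtain K where K: "\<And>x. norm (T x) \<le> norm x * K" and "K > 0"
    using bounded_linear.pos_bounded by blast
  have That_le: "norm (That \<eta> T x n) \<le> supnorm x * K" if "bounded (range x)" for x n
  proof -
    have "norm (That \<eta> T x n) \<le> norm (x n) * K"
      unfolding That_def
      by (rule order_trans[OF order_projection_norm_le[OF bl order_projection] K])
    also have "\<dots> \<le> supnorm x * K"
      using norm_le_supnorm[OF that] \<open>K > 0\<close> by simp
    finally show ?thesis .
  qed
  show ?thesis
    unfolding seq_bounded_op_def
  proof (intro conjI ballI allI exI[where x = K])
    show "That \<eta> T x \<in> Mb \<eta>" if "x \<in> Mb \<eta>" for x
      using that That_M0[OF T B] That_le by (auto simp: Mb_def intro: boundedI)
    show "That \<eta> T (\<lambda>n. x n + y n) = (\<lambda>n. That \<eta> T x n + That \<eta> T y n)" for x y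
      by (simp add: That_def linear_add[OF bounded_linear.linear[OF T_bounded]]
          linear_add[OF linear_proj])
    show "That \<eta> T (\<lambda>n. c *\<^sub>R x n) = (\<lambda>n. c *\<^sub>R That \<eta> T x n)" for c x
      by (simp add: That_def linear_scale[OF bounded_linear.linear[OF T_bounded]]
          linear_scale[OF linear_proj])
    show "supnorm (That \<eta> T x) \<le> K * supnorm x" if "x \<in> Mb \<eta>" for x
      using that That_le by (auto simp: Mb_def mult.commute intro: supnorm_le)
  qed
qed

lemma vec_seq_bounded_op_iota:
  assumes bl: "banach_lattice TYPE('a)"
  shows "vec_seq_bounded_op (Mb \<eta>) (iota \<eta>)"
  unfolding vec_seq_bounded_op_def
proof (intro conjI allI exI[where x = 1])
  have iota_le: "norm (iota \<eta> x n) \<le> norm x" for x n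
    unfolding iota_def by (rule order_projection_norm_le[OF bl order_projection])
  show "iota \<eta> x \<in> Mb \<eta>" for x
    using iota_le by (auto simp: Mb_def M0_iff iota_def apply_le intro: boundedI)
  show "iota \<eta> (x + y) = (\<lambda>n. iota \<eta> x n + iota \<eta> y n)" for x y
    by (simp add: iota_def linear_add[OF linear_proj])
  show "iota \<eta> (c *\<^sub>R x) = (\<lambda>n. c *\<^sub>R iota \<eta> x n)" for c x
    by (simp add: iota_def linear_scale[OF linear_proj])
  show "supnorm (iota \<eta> x) \<le> 1 * norm x" for x
    using iota_le by (simp add: supnorm_le)
qed

lemma iota_volterra:
  assumes T: "volterra B T" and B: "\<And>n. \<eta> n \<in> B"
  shows "iota \<eta> (T x) = That \<eta> T (iota \<eta> x)"
proof
  fix n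
  have "\<eta> n x = \<eta> n (\<eta> n x)"
    by (simp add: apply_le)
  then show "iota \<eta> (T x) n = That \<eta> T (iota \<eta> x) n"
    unfolding iota_def That_def by (rule volterra_eq[OF T B])
qed

end

section \<open>Forward filtrations and the shift\<close>

lemma forward_filtration_projection_chain:
  assumes B: "bool_subalg B" and \<xi>: "forward_filtration B \<xi>"
  shows "projection_chain \<xi>"
proof
  show "order_projection (\<xi> n)" for n
    using B \<xi> unfolding bool_subalg_def forward_filtration_def by blast
  show "\<xi> n \<circ> \<xi> m = \<xi> n" if "n \<le> m" for n m
    using that
  proof (induction m rule: dec_induct)
    case base
    show ?case
      using \<open>order_projection (\<xi> n)\<close> unfolding order_projection_def by blast
  next
    case (step k)
    have "\<xi> k \<circ> \<xi> (Suc k) = \<xi> k"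
      using \<xi> unfolding forward_filtration_def proj_le_def by blast
    then show ?case
      using step.IH by (metis comp_assoc)
  qed
qed

lemma projection_chain_Lshift:
  assumes "projection_chain \<xi>"
  shows "projection_chain (Lshift \<xi>)"
proof -
  interpret projection_chain \<xi>
    by (rule assms)
  show ?thesis
    by unfold_locales (auto simp: Lshift_def order_projection comp_le)
qed

lemma sshift_M0:
  assumes "\<xi> 0 = (\<lambda>x. 0)" and "x \<in> M0 \<xi>"
  shows "sshift x \<in> M0 (Lshift \<xi>)"
  unfolding M0_def
proof (intro CollectI allI impI)
  fix n m :: nat
  assume "n \<le> m"
  then show "Lshift \<xi> n (sshift x m) = sshift x n"
    using assms by (cases "n = 0") (auto simp: M0_def sshift_def Lshift_def)
qed

lemma norm_sshift_le: "bounded (range x) \<Longrightarrow> norm (sshift x n) \<le> supnorm x"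
  using norm_le_supnorm[of x 0] norm_le_supnorm[of x "Suc n"]
  by (auto simp: sshift_def intro: order_trans[OF norm_ge_zero])

lemma seq_bounded_op_sshift:
  fixes \<xi> :: "nat \<Rightarrow> 'a::real_normed_vector \<Rightarrow> 'a"
  assumes "\<xi> 0 = (\<lambda>x. 0)"
  shows "seq_bounded_op (Mb \<xi>) (Mb (Lshift \<xi>)) sshift"
  unfolding seq_bounded_op_def
proof (intro conjI ballI allI exI[where x = 1])
  show "sshift x \<in> Mb (Lshift \<xi>)" if "x \<in> Mb \<xi>" for x
    using that sshift_M0[where \<xi> = \<xi>, OF assms] norm_sshift_le
    by (auto simp: Mb_def intro: boundedI)
  show "sshift (\<lambda>n. x n + y n) = (\<lambda>n. sshift x n + sshift y n)" for x y :: "nat \<Rightarrow> 'a"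
    by (simp add: sshift_def fun_eq_iff)
  show "sshift (\<lambda>n. c *\<^sub>R x n) = (\<lambda>n. c *\<^sub>R sshift x n)" for c and x :: "nat \<Rightarrow> 'a"
    by (simp add: sshift_def fun_eq_iff)
  show "supnorm (sshift x) \<le> 1 * supnorm x" if "x \<in> Mb \<xi>" for x
    using that by (simp add: Mb_def supnorm_le norm_sshift_le)
qed

lemma sshift_That: "\<xi> 0 = (\<lambda>x. 0) \<Longrightarrow> sshift (That \<xi> T x) = That (Lshift \<xi>) T (sshift x)"
  by (auto simp: sshift_def That_def Lshift_def)

theorem theorem4p6:
  fixes B :: "('a::{banach, ordered_real_vector, lattice} \<Rightarrow> 'a) set"
    and \<xi> :: "nat \<Rightarrow> 'a \<Rightarrow> 'a"
    and T :: "'a \<Rightarrow> 'a"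
  assumes "KB_space TYPE('a)"
    and "bool_subalg B"
    and "forward_filtration B \<xi>"
    and "volterra B T"
  shows "(\<forall>x\<in>M0 \<xi>. That \<xi> T x \<in> M0 \<xi>)
    \<and> seq_banach_lattice (Mb \<xi>) \<and> seq_banach_lattice (Mb (Lshift \<xi>))
    \<and> seq_bounded_op (Mb \<xi>) (Mb \<xi>) (That \<xi> T)
    \<and> seq_bounded_op (Mb (Lshift \<xi>)) (Mb (Lshift \<xi>)) (That (Lshift \<xi>) T)
    \<and> vec_seq_bounded_op (Mb \<xi>) (iota \<xi>)
    \<and> bounded_linear T
    \<and> seq_bounded_op (Mb \<xi>) (Mb (Lshift \<xi>)) sshift
    \<and> (\<forall>x. iota \<xi> (T x) = That \<xi> T (iota \<xi> x))
    \<and> (\<forall>x\<in>Mb \<xi>. sshift (That \<xi> T x) = That (Lshift \<xi>) T (sshift x))"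
proof -
  have bl: "banach_lattice TYPE('a)"
    using assms(1) by (simp add: KB_space_def)
  interpret xi: projection_chain \<xi>
    by (rule forward_filtration_projection_chain[OF assms(2,3)])
  interpret Lxi: projection_chain "Lshift \<xi>"
    by (rule projection_chain_Lshift[OF xi.projection_chain_axioms])
  have B: "\<xi> n \<in> B" for n
    using assms(3) by (simp add: forward_filtration_def)
  then have LB: "Lshift \<xi> n \<in> B" for n
    by (simp add: Lshift_def)
  have \<xi>0: "\<xi> 0 = (\<lambda>x. 0)"
    using assms(3) by (simp add: forward_filtration_def)
  show ?thesis
    using xi.That_M0[OF assms(4) B] xi.seq_banach_lattice_Mb[OF bl] Lxi.seq_banach_lattice_Mb[OF bl]
      xi.seq_bounded_op_That[OF bl assms(4) B] Lxi.seq_bounded_op_That[OF bl assms(4) LB]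
      xi.vec_seq_bounded_op_iota[OF bl]
      positive_op_bounded_linear[OF bl volterra_positive_op[OF assms(4)]]
      seq_bounded_op_sshift[where \<xi> = \<xi>, OF \<xi>0] xi.iota_volterra[OF assms(4) B]
      sshift_That[where \<xi> = \<xi>, OF \<xi>0]
    by blast
qed

end
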